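(* Let $G$ be a finite perfect graph, and let $f$ be a positive real-valued function on the set of pairs $(H,v)$ where $H$ is an induced subgraph of $G$ and $v\in V(H)$. Assume that: (i) $f(H,v)\le f(G[V(H)\cup\{w\}],v)$ for every induced subgraph $H$ of $G$, every $v\in V(H)$ and every $w\in V(G)\setminus V(H)$; (ii) for every induced subgraph $H$ of $G$ whose vertex set is an independent set of $G$, $\sum_{v\in V(H)}\frac{1}{f(H,v)}\le 1$. For an induced subgraph $H$ of $G$ and $v\in V(H)$, let $c(H,v)$ be the size of the largest clique of $H$ containing $v$. Then for every induced subgraph $H$ of $G$, \[ \sum_{v\in V(H)}\frac{1}{f(H,v)\,c(H,v)}\le 1. \]
   Context: A graph $G$ is perfect if for every induced subgraph its chromatic number equals its clique number. $G[S]$ denotes the subgraph of $G$ induced by the vertex set $S$. *)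

theory Defs
  imports Main "HOL.Real"
begin

text \<open>Finite simple graph: finite vertex set V, symmetric irreflexive edge relation E
  on V. Induced subgraphs G[S] are identified with their vertex sets S \<subseteq> V.\<close>

definition simple_graph :: "'a set \<Rightarrow> ('a \<Rightarrow> 'a \<Rightarrow> bool) \<Rightarrow> bool" where
  "simple_graph V E \<longleftrightarrow> finite V \<and> (\<forall>x y. E x y \<longrightarrow> x \<in> V \<and> y \<in> V)
     \<and> (\<forall>x y. E x y \<longrightarrow> E y x) \<and> (\<forall>x. \<not> E x x)"

definition is_clique :: "('a \<Rightarrow> 'a \<Rightarrow> bool) \<Rightarrow> 'a set \<Rightarrow> bool" where
  "is_clique E K \<longleftrightarrow> (\<forall>x\<in>K. \<forall>y\<in>K. x \<noteq> y \<longrightarrow> E x y)"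

definition is_independent :: "('a \<Rightarrow> 'a \<Rightarrow> bool) \<Rightarrow> 'a set \<Rightarrow> bool" where
  "is_independent E I \<longleftrightarrow> (\<forall>x\<in>I. \<forall>y\<in>I. \<not> E x y)"

definition clique_number :: "('a \<Rightarrow> 'a \<Rightarrow> bool) \<Rightarrow> 'a set \<Rightarrow> nat" where
  "clique_number E S = Max {card K | K. K \<subseteq> S \<and> is_clique E K}"

definition proper_colouring :: "('a \<Rightarrow> 'a \<Rightarrow> bool) \<Rightarrow> 'a set \<Rightarrow> nat \<Rightarrow> ('a \<Rightarrow> nat) \<Rightarrow> bool" where
  "proper_colouring E S k col \<longleftrightarrow> (\<forall>x\<in>S. col x < k) \<and>
     (\<forall>x\<in>S. \<forall>y\<in>S. E x y \<longrightarrow> col x \<noteq> col y)"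

definition chromatic_number :: "('a \<Rightarrow> 'a \<Rightarrow> bool) \<Rightarrow> 'a set \<Rightarrow> nat" where
  "chromatic_number E S = (LEAST k. \<exists>col. proper_colouring E S k col)"

definition perfect :: "'a set \<Rightarrow> ('a \<Rightarrow> 'a \<Rightarrow> bool) \<Rightarrow> bool" where
  "perfect V E \<longleftrightarrow> (\<forall>S. S \<subseteq> V \<longrightarrow> chromatic_number E S = clique_number E S)"

definition max_clique_at :: "('a \<Rightarrow> 'a \<Rightarrow> bool) \<Rightarrow> 'a set \<Rightarrow> 'a \<Rightarrow> nat" where
  "max_clique_at E S v = Max {card K | K. K \<subseteq> S \<and> v \<in> K \<and> is_clique E K}"

end

theory Submission
  imports Defs
begin

text \<open>
  Let \<open>c = max_clique_at E H\<close> and \<open>N = \<Prod>v\<in>H. c v\<close>, and give each \<open>v \<in> H\<close> the integer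
  weight \<open>N div c v\<close>. A clique \<open>K\<close> of \<open>G\<close> meets \<open>H\<close> in a clique all of whose vertices
  have \<open>c v \<ge> card (K \<inter> H)\<close>, so every clique has weight at most \<open>N\<close>. In a perfect graph
  the weighted chromatic number equals the weighted clique number, so there are \<open>N\<close>
  independent subsets of \<open>H\<close> covering every \<open>v\<close> at least \<open>N div c v\<close> times. By (i) every
  such class \<open>T\<close> has \<open>f T v \<le> f H v\<close>, so by (ii) it contributes at most 1 to
  \<open>\<Sum>v\<in>T. 1 / f H v\<close>; summing over the \<open>N\<close> classes gives the bound \<open>N\<close> for
  \<open>N * (\<Sum>v\<in>H. 1 / (f H v * c v))\<close>.

  The weighted colouring is built by induction on the total weight. For 0/1 weights it is
  a colouring of the support. Otherwise lower the weight of a vertex \<open>v\<close> of weight at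
  least 2 by one and cover the result with \<open>m\<close> classes; a clique of weight \<open>m\<close> then
  avoids \<open>v\<close> and meets every class, in particular \<open>I - {v}\<close> for a class \<open>I\<close> containing
  \<open>v\<close>. Lowering the weight on \<open>I - {v}\<close> as well leaves maximum clique weight \<open>m - 1\<close>,
  and adding \<open>I\<close> to a cover of that weight gives the required \<open>m\<close> classes.
\<close>

definition max_clique_weight :: "('a \<Rightarrow> 'a \<Rightarrow> bool) \<Rightarrow> 'a set \<Rightarrow> ('a \<Rightarrow> nat) \<Rightarrow> nat" where
  "max_clique_weight E V w = Max {sum w K | K. K \<subseteq> V \<and> is_clique E K}"

text \<open>
  \<open>I 0, \<dots>, I (m - 1)\<close> are the colour classes of an \<open>m\<close>-colouring of the graph in which
  each vertex \<open>v\<close> is replaced by \<open>w v\<close> pairwise non-adjacent copies.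
\<close>
definition independent_cover ::
  "('a \<Rightarrow> 'a \<Rightarrow> bool) \<Rightarrow> ('a \<Rightarrow> nat) \<Rightarrow> nat \<Rightarrow> (nat \<Rightarrow> 'a set) \<Rightarrow> bool" where
  "independent_cover E w m I \<longleftrightarrow>
     (\<forall>j<m. I j \<subseteq> {v. 0 < w v} \<and> is_independent E (I j)) \<and>
     (\<forall>v. w v \<le> card {j. j < m \<and> v \<in> I j})"

lemma finite_clique_weights: "finite V \<Longrightarrow> finite {sum w K | K. K \<subseteq> V \<and> is_clique E K}"
  by (rule finite_subset[of _ "sum w ` Pow V"]) auto

lemma clique_weight_le_max:
  "finite V \<Longrightarrow> K \<subseteq> V \<Longrightarrow> is_clique E K \<Longrightarrow> sum w K \<le> max_clique_weight E V w"
  unfolding max_clique_weight_def by (rule Max_ge[OF finite_clique_weights]) auto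

lemma max_clique_weight_le:
  assumes "finite V" and "\<And>K. K \<subseteq> V \<Longrightarrow> is_clique E K \<Longrightarrow> sum w K \<le> m"
  shows "max_clique_weight E V w \<le> m"
  unfolding max_clique_weight_def
  using assms by (intro Max.boundedI finite_clique_weights) (auto simp: is_clique_def)

lemma card_clique_inter_independent_le_1:
  "is_clique E K \<Longrightarrow> is_independent E A \<Longrightarrow> finite K \<Longrightarrow> card (K \<inter> A) \<le> 1"
  using card_le_Suc0_iff_eq[of "K \<inter> A"] unfolding is_clique_def is_independent_def by auto

lemma sum_cover_count_eq:
  fixes g :: "'a \<Rightarrow> 'b::comm_semiring_1" and m :: nat
  assumes "finite K"
  shows "(\<Sum>u\<in>K. of_nat (card {j. j < m \<and> u \<in> I j}) * g u) = (\<Sum>j<m. \<Sum>u\<in>K \<inter> I j. g u)"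
proof -
  have "of_nat (card {j. j < m \<and> u \<in> I j}) * g u = (\<Sum>j<m. if u \<in> I j then g u else 0)" for u
  proof -
    have "{..<m} \<inter> {j. u \<in> I j} = {j. j < m \<and> u \<in> I j}" by auto
    then show ?thesis
      using sum.inter_restrict[OF finite_lessThan, of "\<lambda>_. g u" m "{j. u \<in> I j}"] by simp
  qed
  then have "(\<Sum>u\<in>K. of_nat (card {j. j < m \<and> u \<in> I j}) * g u)
      = (\<Sum>j<m. \<Sum>u\<in>K. if u \<in> I j then g u else 0)"
    by (simp add: sum.swap[of _ K])
  also have "\<dots> = (\<Sum>j<m. \<Sum>u\<in>K \<inter> I j. g u)"
    using assms by (simp add: sum.inter_restrict)
  finally show ?thesis .
qed

lemma sum_fun_upd_decrement:
  fixes w :: "'a \<Rightarrow> nat"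
  assumes "finite K" and "1 \<le> w v"
  shows "sum w K = sum (w(v := w v - 1)) K + (if v \<in> K then 1 else 0)"
proof (cases "v \<in> K")
  case True
  with assms show ?thesis by (simp add: sum.remove)
next
  case False
  then show ?thesis by (auto intro: sum.cong)
qed

lemma card_cover_count_fun_upd:
  "card {j. j < Suc n \<and> u \<in> (I(n := A)) j} = card {j. j < n \<and> u \<in> I j} + (if u \<in> A then 1 else 0)"
proof -
  have "{j. j < Suc n \<and> u \<in> (I(n := A)) j} = {j. j < n \<and> u \<in> I j} \<union> (if u \<in> A then {n} else {})"
    by (auto simp: less_Suc_eq)
  then show ?thesis by (auto simp: card_insert_if)
qed

lemma independent_cover_fun_upd:
  assumes cover: "independent_cover E w' n I"
    and A: "is_independent E A" "A \<subseteq> {u. 0 < w u}"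
    and le: "\<And>u. w' u \<le> w u" "\<And>u. w u \<le> w' u + (if u \<in> A then 1 else 0)"
  shows "independent_cover E w (Suc n) (I(n := A))"
  unfolding independent_cover_def
proof (intro conjI allI impI)
  have pos: "0 < w u" if "0 < w' u" for u
    using that le(1) by (rule less_le_trans)
  fix j assume "j < Suc n"
  then show "(I(n := A)) j \<subseteq> {u. 0 < w u}" "is_independent E ((I(n := A)) j)"
    using cover A pos unfolding independent_cover_def by (fastforce simp: less_Suc_eq)+
next
  fix u
  show "w u \<le> card {j. j < Suc n \<and> u \<in> (I(n := A)) j}"
    using cover le(2)[of u] unfolding independent_cover_def card_cover_count_fun_upd
    by (metis add_le_mono1 order_trans)
qed

lemma heavy_clique_meets_cover_classes:
  assumes cover: "independent_cover E w m I"
    and K: "is_clique E K" "finite K" "m \<le> sum w K" and j: "j < m"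
  shows "K \<inter> I j \<noteq> {}"
proof
  assume empty: "K \<inter> I j = {}"
  have indep: "is_independent E (I i)" if "i < m" for i
    using cover that unfolding independent_cover_def by blast
  have "sum w K \<le> (\<Sum>u\<in>K. card {i. i < m \<and> u \<in> I i})"
    using cover by (intro sum_mono) (simp add: independent_cover_def)
  with K(3) have "m \<le> (\<Sum>u\<in>K. card {i. i < m \<and> u \<in> I i})" by simp
  also have "\<dots> = (\<Sum>i<m. card (K \<inter> I i))"
    using sum_cover_count_eq[OF K(2), of m I "\<lambda>_. 1 :: nat"] by simp
  also have "\<dots> = (\<Sum>i\<in>{..<m} - {j}. card (K \<inter> I i))"
    using j empty by (simp add: sum.remove)
  also have "\<dots> \<le> (\<Sum>i\<in>{..<m} - {j}. 1)"
    using K(1,2) indep card_clique_inter_independent_le_1 by (intro sum_mono) auto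
  also have "\<dots> < m" using j by simp
  finally show False by simp
qed

lemma simple_graph_finite: "simple_graph V E \<Longrightarrow> finite V"
  unfolding simple_graph_def by blast

lemma simple_graph_irrefl: "simple_graph V E \<Longrightarrow> \<not> E x x"
  unfolding simple_graph_def by blast

lemma clique_number_le:
  assumes "finite S" and "\<And>K. K \<subseteq> S \<Longrightarrow> is_clique E K \<Longrightarrow> card K \<le> k"
  shows "clique_number E S \<le> k"
proof -
  have "finite {card K | K. K \<subseteq> S \<and> is_clique E K}"
    by (rule finite_subset[of _ "card ` Pow S"]) (use assms(1) in auto)
  then show ?thesis
    unfolding clique_number_def using assms(2)
    by (intro Max.boundedI) (auto simp: is_clique_def)
qed

lemma perfect_imp_proper_colouring:
  assumes "simple_graph V E" and "perfect V E" and "S \<subseteq> V"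
  shows "\<exists>col. proper_colouring E S (clique_number E S) col"
proof -
  have "finite S" using simple_graph_finite[OF assms(1)] assms(3) by (rule finite_subset[rotated])
  then obtain h where h: "bij_betw h S {0..<card S}" using ex_bij_betw_finite_nat by blast
  have "proper_colouring E S (card S) h"
    using h simple_graph_irrefl[OF assms(1)] unfolding proper_colouring_def
    by (auto simp: bij_betw_def inj_on_def dest: bij_betw_apply)
  then have "\<exists>k col. proper_colouring E S k col" by blast
  then have "\<exists>col. proper_colouring E S (chromatic_number E S) col"
    unfolding chromatic_number_def by (rule LeastI_ex)
  with assms(2,3) show ?thesis by (simp add: perfect_def)
qed

lemma perfect_imp_independent_cover_0_1:
  assumes "simple_graph V E" and "perfect V E"
    and supp: "\<And>v. 0 < w v \<Longrightarrow> v \<in> V" and le1: "\<And>v. w v \<le> 1"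
    and m: "max_clique_weight E V w \<le> m"
  shows "\<exists>I. independent_cover E w m I"
proof -
  define S where "S = {v. 0 < w v}"
  have SV: "S \<subseteq> V" using supp by (auto simp: S_def)
  have fV: "finite V" using assms(1) by (rule simple_graph_finite)
  have weight_1: "w v = 1" if "v \<in> S" for v
    using that le1[of v] by (simp add: S_def)
  have clique_le: "clique_number E S \<le> m"
  proof (rule clique_number_le)
    show "finite S" using SV fV by (rule finite_subset)
  next
    fix K assume K: "K \<subseteq> S" "is_clique E K"
    then have "sum w K = card K" using weight_1 by (simp add: subset_eq)
    moreover have "sum w K \<le> max_clique_weight E V w"
      using K SV by (intro clique_weight_le_max[OF fV]) auto
    ultimately show "card K \<le> m" using m by simp
  qed
  obtain col where col: "proper_colouring E S (clique_number E S) col"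
    using perfect_imp_proper_colouring[OF assms(1,2) SV] by blast
  then have col_lt: "col v < m" if "v \<in> S" for v
    using that clique_le unfolding proper_colouring_def by fastforce
  have "independent_cover E w m (\<lambda>j. {v \<in> S. col v = j})"
    unfolding independent_cover_def
  proof (intro conjI allI impI)
    fix j
    show "{v \<in> S. col v = j} \<subseteq> {v. 0 < w v}" by (auto simp: S_def)
    show "is_independent E {v \<in> S. col v = j}"
      using col unfolding proper_colouring_def is_independent_def by blast
  next
    fix v
    show "w v \<le> card {j. j < m \<and> v \<in> {v \<in> S. col v = j}}"
    proof (cases "v \<in> S")
      case True
      then have "{j. j < m \<and> v \<in> {v \<in> S. col v = j}} = {col v}" using col_lt by auto
      then show ?thesis using le1[of v] by simp
    qed (simp add: S_def)
  qed
  then show ?thesis by blast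
qed

lemma max_clique_weight_decrement_le:
  assumes fV: "finite V" and max: "max_clique_weight E V w \<le> Suc n"
    and A: "A \<subseteq> {u. 0 < w u}"
    and meets: "\<And>K. K \<subseteq> V \<Longrightarrow> is_clique E K \<Longrightarrow> sum w K = Suc n \<Longrightarrow> K \<inter> A \<noteq> {}"
  shows "max_clique_weight E V (\<lambda>u. if u \<in> A then w u - 1 else w u) \<le> n"
proof (rule max_clique_weight_le[OF fV])
  fix K assume K: "K \<subseteq> V" "is_clique E K"
  define w' where "w' u = (if u \<in> A then w u - 1 else w u)" for u
  have fK: "finite K" using K(1) fV finite_subset by blast
  have le: "sum w K \<le> Suc n" using order_trans[OF clique_weight_le_max[OF fV K] max] .
  show "sum w' K \<le> n"
  proof (cases "sum w K = Suc n")
    case False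
    moreover have "sum w' K \<le> sum w K" by (rule sum_mono) (simp add: w'_def)
    ultimately show ?thesis using le by simp
  next
    case True
    then obtain u where u: "u \<in> K" "u \<in> A" using meets K by blast
    have "sum w' K = w' u + sum w' (K - {u})" using u fK by (simp add: sum.remove)
    also have "\<dots> \<le> (w u - 1) + sum w (K - {u})"
      using u by (intro add_mono sum_mono) (simp_all add: w'_def)
    also have "\<dots> = sum w K - 1" using u fK A by (auto simp: sum.remove)
    finally show ?thesis using True by simp
  qed
qed

lemma max_clique_weight_decrement_cover_class_le:
  assumes fV: "finite V" and cover: "independent_cover E w (Suc n) I"
    and max: "max_clique_weight E V w \<le> Suc n" and j: "j < Suc n"
    and avoid: "\<And>K. K \<subseteq> V \<Longrightarrow> is_clique E K \<Longrightarrow> sum w K = Suc n \<Longrightarrow> v \<notin> K"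
  shows "max_clique_weight E V (\<lambda>u. if u \<in> I j - {v} then w u - 1 else w u) \<le> n"
proof (rule max_clique_weight_decrement_le[OF fV max])
  show "I j - {v} \<subseteq> {u. 0 < w u}" using cover j by (auto simp: independent_cover_def)
  fix K assume K: "K \<subseteq> V" "is_clique E K" "sum w K = Suc n"
  have "K \<inter> I j \<noteq> {}"
    using heavy_clique_meets_cover_classes[OF cover K(2) _ _ j] K(1,3) fV finite_subset by auto
  then show "K \<inter> (I j - {v}) \<noteq> {}" using avoid[OF K] by blast
qed

theorem perfect_imp_independent_cover:
  assumes sg: "simple_graph V E" and pf: "perfect V E"
  shows "(\<And>v. 0 < w v \<Longrightarrow> v \<in> V) \<Longrightarrow> max_clique_weight E V w \<le> m \<Longrightarrow>
    \<exists>I. independent_cover E w m I"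
proof (induction "sum w V" arbitrary: w m rule: less_induct)
  case less
  have fV: "finite V" using sg by (rule simple_graph_finite)
  show ?case
  proof (cases "\<forall>v. w v \<le> 1")
    case True
    then show ?thesis using perfect_imp_independent_cover_0_1[OF sg pf] less.prems by blast
  next
    case False
    then obtain v where v: "1 < w v" by (auto simp: not_le)
    have vV: "v \<in> V" using less.prems(1)[of v] v by simp
    define w' where "w' = w(v := w v - 1)"
    have w'_le: "w' u \<le> w u" for u by (simp add: w'_def)
    have sum_w: "sum w K = sum w' K + (if v \<in> K then 1 else 0)" if "K \<subseteq> V" for K
      using sum_fun_upd_decrement[of K w v] v finite_subset[OF that fV] by (simp add: w'_def)
    have max': "max_clique_weight E V w' \<le> m"
    proof (rule max_clique_weight_le[OF fV])
      fix K assume K: "K \<subseteq> V" "is_clique E K"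
      have "sum w' K \<le> sum w K" using sum_w[OF K(1)] by simp
      also have "\<dots> \<le> m" using order_trans[OF clique_weight_le_max[OF fV K] less.prems(2)] .
      finally show "sum w' K \<le> m" .
    qed
    have lt: "sum w' V < sum w V" using sum_w[of V] vV by simp
    have supp': "0 < w' u \<Longrightarrow> u \<in> V" for u
      using less.prems(1) w'_le by (meson less_le_trans)
    obtain I where I: "independent_cover E w' m I" using less.hyps[OF lt supp' max'] by blast
    have "w' v \<le> card {j. j < m \<and> v \<in> I j}" using I by (simp add: independent_cover_def)
    then have "0 < card {j. j < m \<and> v \<in> I j}" using v by (simp add: w'_def)
    then obtain j where j: "j < m" "v \<in> I j" by (auto simp: card_gt_0_iff)
    then obtain n where n: "m = Suc n" by (cases m) auto
    \<comment> \<open>A clique of full weight avoids \<open>v\<close>, hence meets \<open>I j - {v}\<close>.\<close>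
    define w'' where "w'' u = (if u \<in> I j - {v} then w' u - 1 else w' u)" for u
    have max'': "max_clique_weight E V w'' \<le> n"
      unfolding w''_def
    proof (rule max_clique_weight_decrement_cover_class_le[OF fV])
      fix K assume K: "K \<subseteq> V" "is_clique E K" "sum w' K = Suc n"
      show "v \<notin> K"
        using sum_w[OF K(1)] clique_weight_le_max[OF fV K(1,2), of w] less.prems(2) K(3) n
        by auto
    qed (use I max' j n in auto)
    have "sum w'' V \<le> sum w' V" by (rule sum_mono) (simp add: w''_def)
    with lt have lt'': "sum w'' V < sum w V" by simp
    have supp'': "0 < w'' u \<Longrightarrow> u \<in> V" for u
      using supp' by (auto simp: w''_def split: if_splits)
    obtain I'' where "independent_cover E w'' n I''" using less.hyps[OF lt'' supp'' max''] by blast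
    then have "independent_cover E w (Suc n) (I''(n := I j))"
    proof (rule independent_cover_fun_upd)
      show "is_independent E (I j)" "I j \<subseteq> {u. 0 < w u}"
        using I j w'_le by (auto simp: independent_cover_def intro: less_le_trans)
      fix u
      show "w'' u \<le> w u" using w'_le[of u] by (auto simp: w''_def)
      show "w u \<le> w'' u + (if u \<in> I j then 1 else 0)"
        using I j v by (auto simp: w''_def w'_def independent_cover_def)
    qed
    then show ?thesis using n by blast
  qed
qed

lemma card_le_max_clique_at:
  assumes "finite S" and "K \<subseteq> S" and "v \<in> K" and "is_clique E K"
  shows "card K \<le> max_clique_at E S v"
  unfolding max_clique_at_def
  by (rule Max_ge, rule finite_subset[of _ "card ` Pow S"]) (use assms in auto)

lemma max_clique_at_pos: "finite S \<Longrightarrow> v \<in> S \<Longrightarrow> 0 < max_clique_at E S v"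
  using card_le_max_clique_at[of S "{v}" v E] by (simp add: is_clique_def)

lemma max_clique_weight_div_max_clique_at_le:
  assumes fV: "finite V" and fH: "finite H"
  shows "max_clique_weight E V (\<lambda>u. if u \<in> H then N div max_clique_at E H u else 0) \<le> N"
proof (rule max_clique_weight_le[OF fV])
  fix K assume K: "K \<subseteq> V" "is_clique E K"
  have fK: "finite K" using K(1) fV finite_subset by blast
  have clique: "is_clique E (K \<inter> H)" using K(2) by (simp add: is_clique_def)
  have "(\<Sum>u\<in>K. if u \<in> H then N div max_clique_at E H u else 0)
      = (\<Sum>u\<in>K \<inter> H. N div max_clique_at E H u)"
    using fK by (simp add: sum.inter_restrict)
  also have "\<dots> \<le> (\<Sum>u\<in>K \<inter> H. N div card (K \<inter> H))"
  proof (rule sum_mono)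
    fix u assume u: "u \<in> K \<inter> H"
    then have "0 < card (K \<inter> H)" using fK card_gt_0_iff by blast
    then show "N div max_clique_at E H u \<le> N div card (K \<inter> H)"
      using card_le_max_clique_at[OF fH _ u clique] by (simp add: div_le_mono2)
  qed
  also have "\<dots> = card (K \<inter> H) * (N div card (K \<inter> H))" by simp
  also have "\<dots> \<le> N" by (simp add: div_times_less_eq_dividend mult.commute)
  finally show "(\<Sum>u\<in>K. if u \<in> H then N div max_clique_at E H u else 0) \<le> N" .
qed

lemma weighted_sum_le_of_independent_cover:
  fixes g :: "'a \<Rightarrow> real"
  assumes cover: "independent_cover E w m I" and fH: "finite H"
    and sub: "\<And>j. j < m \<Longrightarrow> I j \<subseteq> H" and g: "\<And>u. u \<in> H \<Longrightarrow> 0 \<le> g u"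
    and classes: "\<And>j. j < m \<Longrightarrow> sum g (I j) \<le> 1"
  shows "(\<Sum>u\<in>H. real (w u) * g u) \<le> m"
proof -
  have "(\<Sum>u\<in>H. real (w u) * g u) \<le> (\<Sum>u\<in>H. real (card {j. j < m \<and> u \<in> I j}) * g u)"
    using cover g by (intro sum_mono mult_right_mono) (auto simp: independent_cover_def)
  also have "\<dots> = (\<Sum>j<m. \<Sum>u\<in>H \<inter> I j. g u)" by (rule sum_cover_count_eq[OF fH])
  also have "\<dots> = (\<Sum>j<m. sum g (I j))" using sub by (simp add: Int_absorb1)
  also have "\<dots> \<le> (\<Sum>j<m. 1)" using classes by (intro sum_mono) simp
  finally show ?thesis by simp
qed

lemma subset_mono_of_insert_mono:
  fixes f :: "'a set \<Rightarrow> 'a \<Rightarrow> 'b::order"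
  assumes mono: "\<And>S v w. S \<subseteq> V \<Longrightarrow> v \<in> S \<Longrightarrow> w \<in> V - S \<Longrightarrow> f S v \<le> f (insert w S) v"
    and "finite T" and "S \<subseteq> T" and "T \<subseteq> V" and "v \<in> S"
  shows "f S v \<le> f T v"
proof -
  have "f S v \<le> f (S \<union> D) v" if "finite D" "S \<union> D \<subseteq> V" for D
    using that
  proof (induction D rule: finite_induct)
    case (insert x D)
    then have "f (S \<union> D) v \<le> f (insert x (S \<union> D)) v"
      using \<open>v \<in> S\<close> by (cases "x \<in> S") (auto simp: insert_absorb intro!: mono)
    with insert show ?case by (auto intro: order_trans)
  qed simp
  with assms(2-4) show ?thesis by (metis Un_absorb1 finite_Un)
qed

lemma sum_inverse_le_1_of_independent_subset:
  fixes f :: "'a set \<Rightarrow> 'a \<Rightarrow> real"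
  assumes pos: "\<And>S v. S \<subseteq> V \<Longrightarrow> v \<in> S \<Longrightarrow> f S v > 0"
    and mono: "\<And>S v w. S \<subseteq> V \<Longrightarrow> v \<in> S \<Longrightarrow> w \<in> V - S \<Longrightarrow> f S v \<le> f (insert w S) v"
    and indep: "\<And>S. S \<subseteq> V \<Longrightarrow> is_independent E S \<Longrightarrow> (\<Sum>v\<in>S. 1 / f S v) \<le> 1"
    and "finite H" and "H \<subseteq> V" and "T \<subseteq> H" and "is_independent E T"
  shows "(\<Sum>v\<in>T. 1 / f H v) \<le> 1"
proof -
  have "(\<Sum>v\<in>T. 1 / f H v) \<le> (\<Sum>v\<in>T. 1 / f T v)"
  proof (rule sum_mono)
    fix v assume v: "v \<in> T"
    have "f T v \<le> f H v"
      using mono assms(4,6,5) v by (rule subset_mono_of_insert_mono)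
    moreover have "0 < f T v" using pos assms(5,6) v by blast
    ultimately show "1 / f H v \<le> 1 / f T v" by (simp add: frac_le)
  qed
  also have "\<dots> \<le> 1" using assms(5-7) by (intro indep) auto
  finally show ?thesis .
qed

lemma perfect_sum_div_max_clique_at_le_1:
  fixes g :: "'a \<Rightarrow> real"
  assumes "simple_graph V E" and "perfect V E" and HV: "H \<subseteq> V"
    and g: "\<And>u. u \<in> H \<Longrightarrow> 0 \<le> g u"
    and independent: "\<And>T. T \<subseteq> H \<Longrightarrow> is_independent E T \<Longrightarrow> sum g T \<le> 1"
  shows "(\<Sum>u\<in>H. g u / real (max_clique_at E H u)) \<le> 1"
proof -
  have fV: "finite V" and fH: "finite H"
    using simple_graph_finite[OF assms(1)] HV finite_subset by auto
  define c where "c = max_clique_at E H"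
  define N where "N = prod c H"
  define w where "w u = (if u \<in> H then N div c u else 0)" for u
  have c_pos: "0 < c u" if "u \<in> H" for u using max_clique_at_pos[OF fH that] by (simp add: c_def)
  then have N_pos: "0 < N" by (simp add: N_def prod_pos)
  have "max_clique_weight E V w \<le> N"
    unfolding w_def[abs_def] c_def by (rule max_clique_weight_div_max_clique_at_le[OF fV fH])
  moreover have "0 < w u \<Longrightarrow> u \<in> V" for u using HV by (auto simp: w_def split: if_splits)
  ultimately obtain I where I: "independent_cover E w N I"
    using perfect_imp_independent_cover[OF assms(1,2)] by blast
  have I_sub: "I j \<subseteq> H" if "j < N" for j
    using I that by (auto simp: independent_cover_def w_def split: if_splits)
  have "g u / real (c u) = real (w u) * g u / real N" if u: "u \<in> H" for u
  proof -
    have "c u dvd N" unfolding N_def using fH u by (rule dvd_prodI)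
    then show ?thesis using u c_pos[OF u] N_pos by (simp add: w_def real_of_nat_div field_simps)
  qed
  then have "(\<Sum>u\<in>H. g u / real (c u)) = (\<Sum>u\<in>H. real (w u) * g u) / real N"
    by (simp add: sum_divide_distrib)
  also have "\<dots> \<le> real N / real N"
    using I fH I_sub g independent
    by (intro divide_right_mono weighted_sum_le_of_independent_cover)
      (auto simp: independent_cover_def)
  finally show ?thesis using N_pos by (simp add: c_def)
qed

theorem theorem7:
  fixes V :: "'a set" and E :: "'a \<Rightarrow> 'a \<Rightarrow> bool" and f :: "'a set \<Rightarrow> 'a \<Rightarrow> real"
  assumes "simple_graph V E"
    and "perfect V E"
    and pos: "\<And>S v. S \<subseteq> V \<Longrightarrow> v \<in> S \<Longrightarrow> f S v > 0"
    and mono: "\<And>S v w. S \<subseteq> V \<Longrightarrow> v \<in> S \<Longrightarrow> w \<in> V - S \<Longrightarrow> f S v \<le> f (insert w S) v"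
    and indep: "\<And>S. S \<subseteq> V \<Longrightarrow> is_independent E S \<Longrightarrow> (\<Sum>v\<in>S. 1 / f S v) \<le> 1"
    and "H \<subseteq> V"
  shows "(\<Sum>v\<in>H. 1 / (f H v * real (max_clique_at E H v))) \<le> 1"
proof -
  have "(\<Sum>v\<in>H. 1 / f H v / real (max_clique_at E H v)) \<le> 1"
  proof (rule perfect_sum_div_max_clique_at_le_1[OF assms(1,2,6)])
    show "0 \<le> 1 / f H u" if "u \<in> H" for u using pos[OF assms(6) that] by simp
    show "(\<Sum>v\<in>T. 1 / f H v) \<le> 1" if "T \<subseteq> H" "is_independent E T" for T
      using simple_graph_finite[OF assms(1)] assms(6) that finite_subset
      by (intro sum_inverse_le_1_of_independent_subset[OF pos mono indep]) auto
  qed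
  then show ?thesis by simp
qed

end
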